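(* For every $\epsilon>0$ there is $\nu_0(\epsilon)$ such that every numerical semigroup $S$ with minimal generators $a_1<a_2<\cdots<a_\nu$ satisfying (i) $a_2>\frac{c(S)+\mu(S)}{3}$, (ii) $\nu=\nu(S)\ge\nu_0(\epsilon)$, and (iii) $\mu(S)\le\frac{8}{25}\nu^2+\frac15\nu-\frac12-\epsilon$, satisfies Wilf's conjecture, i.e. $\nu(S)\,|L(S)|\ge c(S)$.
   Context: A numerical semigroup is a submonoid $S\subseteq\mathbb{N}$ with finite complement. $\nu(S)$ is the number of minimal generators (embedding dimension), $\mu(S)=a_1$ the smallest minimal generator (multiplicity), $c(S)$ the conductor (least integer with $c(S)+\mathbb{N}\subseteq S$), and $L(S)=\{x\in S: 0\le x<c(S)\}$. $S$ satisfies Wilf's conjecture if $\nu(S)|L(S)|\ge c(S)$. *)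

theory Defs
  imports Complex_Main
begin

definition numerical_semigroup :: "nat set \<Rightarrow> bool" where
  "numerical_semigroup S \<longleftrightarrow> 0 \<in> S \<and> (\<forall>x\<in>S. \<forall>y\<in>S. x + y \<in> S) \<and> finite (UNIV - S)"

definition min_gens :: "nat set \<Rightarrow> nat set" where
  "min_gens S = {a \<in> S. a \<noteq> 0 \<and> \<not> (\<exists>x\<in>S. \<exists>y\<in>S. x \<noteq> 0 \<and> y \<noteq> 0 \<and> a = x + y)}"

definition emb_dim :: "nat set \<Rightarrow> nat" where
  "emb_dim S = card (min_gens S)"

definition multiplicity :: "nat set \<Rightarrow> nat" where
  "multiplicity S = Min (min_gens S)"

definition second_gen :: "nat set \<Rightarrow> nat" where
  "second_gen S = Min (min_gens S - {multiplicity S})"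

definition conductor :: "nat set \<Rightarrow> nat" where
  "conductor S = (LEAST c. \<forall>x\<ge>c. x \<in> S)"

definition Lset :: "nat set \<Rightarrow> nat set" where
  "Lset S = {x \<in> S. x < conductor S}"

end

(* Let m be the multiplicity, c the conductor, and h w = ceil((c - w)/m) the number of elements
   of L(S) in the class w + mN; put q = h 0. The Apery set of m has m elements: 0, the nu - 1
   other minimal generators, and a remainder T. Its elements lie below c + m < 3 a2, so every t
   in T is a sum x + y of exactly two generators, both below c, and h x + h y >= q except for at
   most q m - c values of t. Each generator occurs as a summand at most nu times, hence
   q |T| <= nu H + q m - c with H the sum of h g over the generators g < c. Together with
   q m <= q nu + q |T| this yields c <= nu (q + H) <= nu |L(S)|. *)

theory Submission
  imports Defs
begin

section \<open>Minimal generators\<close>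

lemma numerical_semigroup_add_mem:
  "numerical_semigroup S \<Longrightarrow> x \<in> S \<Longrightarrow> y \<in> S \<Longrightarrow> x + y \<in> S"
  unfolding numerical_semigroup_def by blast

lemma numerical_semigroup_zero_mem: "numerical_semigroup S \<Longrightarrow> 0 \<in> S"
  unfolding numerical_semigroup_def by blast

lemma numerical_semigroup_mult_mem:
  assumes "numerical_semigroup S" "x \<in> S"
  shows "k * x \<in> S"
  by (induction k)
     (use assms numerical_semigroup_zero_mem numerical_semigroup_add_mem in auto)

lemma conductor_le_imp_mem:
  assumes ns: "numerical_semigroup S" and "conductor S \<le> x"
  shows "x \<in> S"
proof -
  have "finite (UNIV - S)" using ns unfolding numerical_semigroup_def by blast
  then obtain b where "\<forall>y \<in> UNIV - S. y < b"
    using finite_nat_set_iff_bounded by blast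
  then have "\<exists>c. \<forall>x\<ge>c. x \<in> S"
    by (metis DiffI UNIV_I not_le)
  then have "\<forall>x\<ge>conductor S. x \<in> S"
    unfolding conductor_def by (rule LeastI_ex)
  with assms(2) show ?thesis by blast
qed

lemma min_gens_subset: "min_gens S \<subseteq> S"
  unfolding min_gens_def by blast

lemma zero_notin_min_gens: "0 \<notin> min_gens S"
  unfolding min_gens_def by blast

lemma min_gen_le_mem:
  assumes ns: "numerical_semigroup S" and "x \<in> S" "x \<noteq> 0"
  shows "\<exists>g\<in>min_gens S. g \<le> x \<and> x - g \<in> S"
  using assms(2,3)
proof (induction x rule: less_induct)
  case (less x)
  show ?case
  proof (cases "x \<in> min_gens S")
    case True
    then show ?thesis using numerical_semigroup_zero_mem[OF ns] by auto
  next
    case False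
    then obtain y z where yz: "y \<in> S" "z \<in> S" "y \<noteq> 0" "z \<noteq> 0" "x = y + z"
      using less.prems unfolding min_gens_def by auto
    moreover have "y < x" using yz by simp
    ultimately obtain g where g: "g \<in> min_gens S" "g \<le> y" "y - g \<in> S"
      using less.IH by blast
    have "x - g = (y - g) + z" using g yz by auto
    then have "x - g \<in> S" using numerical_semigroup_add_mem[OF ns g(3) yz(2)] by simp
    moreover have "g \<le> x" using g yz by simp
    ultimately show ?thesis using g(1) by blast
  qed
qed

lemma finite_min_gens:
  assumes ns: "numerical_semigroup S"
  shows "finite (min_gens S)"
proof -
  let ?c = "Suc (conductor S)"
  have "min_gens S \<subseteq> {..<2 * ?c}"
  proof
    fix g assume g: "g \<in> min_gens S"
    show "g \<in> {..<2 * ?c}"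
    proof (rule ccontr)
      assume "g \<notin> {..<2 * ?c}"
      then have "g = ?c + (g - ?c)" "?c \<le> g - ?c" by auto
      moreover have "?c \<in> S" "g - ?c \<in> S"
        using conductor_le_imp_mem[OF ns] \<open>?c \<le> g - ?c\<close> by auto
      moreover have "?c \<noteq> 0" "g - ?c \<noteq> 0" using \<open>?c \<le> g - ?c\<close> by auto
      ultimately show False using g unfolding min_gens_def by blast
    qed
  qed
  then show ?thesis by (rule finite_subset) simp
qed

lemma min_gens_nonempty:
  assumes "numerical_semigroup S"
  shows "min_gens S \<noteq> {}"
proof -
  have "Suc (conductor S) \<in> S" using conductor_le_imp_mem[OF assms] by simp
  then show ?thesis using min_gen_le_mem[OF assms] by blast
qed

lemma multiplicity_in_min_gens:
  "numerical_semigroup S \<Longrightarrow> multiplicity S \<in> min_gens S"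
  unfolding multiplicity_def by (intro Min_in finite_min_gens min_gens_nonempty)

lemma multiplicity_le:
  "numerical_semigroup S \<Longrightarrow> g \<in> min_gens S \<Longrightarrow> multiplicity S \<le> g"
  unfolding multiplicity_def by (intro Min_le finite_min_gens)

lemma second_gen_le:
  "numerical_semigroup S \<Longrightarrow> g \<in> min_gens S - {multiplicity S} \<Longrightarrow> second_gen S \<le> g"
  unfolding second_gen_def by (intro Min_le) (simp_all add: finite_min_gens)

lemma multiplicity_pos: "numerical_semigroup S \<Longrightarrow> 0 < multiplicity S"
  using multiplicity_in_min_gens zero_notin_min_gens by (metis gr0I)

section \<open>Apery sets\<close>

definition apery :: "nat set \<Rightarrow> nat \<Rightarrow> nat set" where
  "apery S m = {w \<in> S. \<not> (m \<le> w \<and> w - m \<in> S)}"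

lemma zero_in_apery: "numerical_semigroup S \<Longrightarrow> 0 < m \<Longrightarrow> 0 \<in> apery S m"
  unfolding apery_def using numerical_semigroup_zero_mem by auto

lemma self_notin_apery: "numerical_semigroup S \<Longrightarrow> m \<notin> apery S m"
  unfolding apery_def using numerical_semigroup_zero_mem by auto

lemma apery_less_conductor_add:
  assumes "numerical_semigroup S" "w \<in> apery S m"
  shows "w < conductor S + m"
  using assms conductor_le_imp_mem[OF assms(1), of "w - m"] unfolding apery_def by force

lemma finite_apery: "numerical_semigroup S \<Longrightarrow> finite (apery S m)"
  by (rule finite_subset[of _ "{..<conductor S + m}"]) (auto dest: apery_less_conductor_add)

lemma apery_mod_eq_imp_eq:
  assumes ns: "numerical_semigroup S" and "m \<in> S"
    and w: "w \<in> apery S m" "w' \<in> apery S m" "w mod m = w' mod m"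
  shows "w = w'"
proof -
  have "w = w'" if le: "w \<le> w'" and w: "w \<in> apery S m" "w' \<in> apery S m" "w mod m = w' mod m"
    for w w'
  proof (rule ccontr)
    assume "w \<noteq> w'"
    have "m dvd w' - w" using mod_eq_dvd_iff_nat[OF le] w(3)[symmetric] by simp
    then obtain k where k: "w' - w = m * k" by (rule dvdE)
    with \<open>w \<noteq> w'\<close> le obtain j where "k = Suc j" by (cases k) auto
    then have "m \<le> w'" "w' - m = w + j * m" using k le by (auto simp: algebra_simps)
    moreover have "w + j * m \<in> S"
      using numerical_semigroup_add_mem[OF ns] numerical_semigroup_mult_mem[OF ns \<open>m \<in> S\<close>] w(1)
      unfolding apery_def by blast
    ultimately show False using w(2) unfolding apery_def by auto
  qed
  from this[of w w'] this[of w' w] w show ?thesis by (cases "w \<le> w'") auto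
qed

lemma card_apery:
  assumes ns: "numerical_semigroup S" and m: "m \<in> S" "0 < m"
  shows "card (apery S m) = m"
proof -
  have "(\<lambda>w. w mod m) ` apery S m = {..<m}"
  proof
    show "(\<lambda>w. w mod m) ` apery S m \<subseteq> {..<m}" using m by auto
    show "{..<m} \<subseteq> (\<lambda>w. w mod m) ` apery S m"
    proof
      fix r assume r: "r \<in> {..<m}"
      let ?P = "\<lambda>x. x \<in> S \<and> x mod m = r"
      have "conductor S \<le> conductor S * m + r" using m(2) by (simp add: trans_le_add1)
      then have "?P (conductor S * m + r)" using r conductor_le_imp_mem[OF ns] by simp
      then have w: "?P (Least ?P)" by (rule LeastI)
      have "Least ?P \<in> apery S m"
      proof -
        have False if "m \<le> Least ?P" "Least ?P - m \<in> S"
        proof -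
          have "?P (Least ?P - m)" using that w by (metis le_add_diff_inverse2 mod_add_self2)
          then have "Least ?P \<le> Least ?P - m" by (rule Least_le)
          with that m show False by linarith
        qed
        with w show ?thesis unfolding apery_def by blast
      qed
      with w show "r \<in> (\<lambda>w. w mod m) ` apery S m" by force
    qed
  qed
  moreover have "inj_on (\<lambda>w. w mod m) (apery S m)"
    using apery_mod_eq_imp_eq[OF ns m(1)] by (meson inj_onI)
  ultimately show ?thesis by (metis card_image card_lessThan)
qed

lemma min_gens_in_apery:
  assumes "m \<in> S" "0 < m" "g \<in> min_gens S" "g \<noteq> m"
  shows "g \<in> apery S m"
proof -
  have False if "m \<le> g" "g - m \<in> S"
  proof -
    have "g = m + (g - m)" "g - m \<noteq> 0" using that assms(4) by auto
    with that assms show False unfolding min_gens_def by blast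
  qed
  with assms(3) show ?thesis using min_gens_subset unfolding apery_def by blast
qed

lemma apery_summand_min_gen_le:
  assumes ns: "numerical_semigroup S"
    and t: "t \<in> apery S m" "t = u + v" and uv: "u \<in> S" "v \<in> S" "u \<noteq> 0"
  shows "\<exists>g\<in>min_gens S - {m}. g \<le> u \<and> u - g \<in> S"
proof -
  obtain g where g: "g \<in> min_gens S" "g \<le> u" "u - g \<in> S"
    using min_gen_le_mem[OF ns uv(1,3)] by blast
  have "g \<noteq> m"
  proof
    assume "g = m"
    then have "m \<le> t" "t - m = (u - m) + v" using g t by auto
    moreover have "(u - m) + v \<in> S"
      using numerical_semigroup_add_mem[OF ns] g(3) uv(2) \<open>g = m\<close> by simp
    ultimately show False using t(1) unfolding apery_def by auto
  qed
  with g show ?thesis by blast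
qed

lemma multiplicity_eq_emb_dim_add_card:
  assumes ns: "numerical_semigroup S"
  shows "multiplicity S = emb_dim S + card (apery S (multiplicity S) - {0} - min_gens S)"
proof -
  let ?m = "multiplicity S" and ?M = "min_gens S"
  define A where "A = apery S ?m"
  have m: "?m \<in> ?M" "?m \<in> S" "0 < ?m"
    using multiplicity_in_min_gens[OF ns] min_gens_subset multiplicity_pos[OF ns] by auto
  have split: "A = insert 0 (?M - {?m}) \<union> (A - {0} - ?M)"
    using min_gens_in_apery[OF m(2,3)] zero_in_apery[OF ns m(3)] self_notin_apery[OF ns]
    unfolding A_def by blast
  have "card (insert 0 (?M - {?m})) = Suc (card ?M - 1)"
    using finite_min_gens[OF ns] m(1) zero_notin_min_gens by simp
  moreover have "0 < card ?M" using finite_min_gens[OF ns] m(1) card_gt_0_iff by blast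
  ultimately have "card (insert 0 (?M - {?m})) = emb_dim S" unfolding emb_dim_def by linarith
  moreover have "card A = card (insert 0 (?M - {?m})) + card (A - {0} - ?M)"
  proof -
    have "card A = card (insert 0 (?M - {?m}) \<union> (A - {0} - ?M))"
      using split by (rule arg_cong)
    also have "\<dots> = card (insert 0 (?M - {?m})) + card (A - {0} - ?M)"
      using finite_min_gens[OF ns] finite_apery[OF ns] unfolding A_def
      by (intro card_Un_disjoint) auto
    finally show ?thesis .
  qed
  ultimately show ?thesis using card_apery[OF ns m(2,3)] unfolding A_def by simp
qed

lemma apery_multiplicity_eq_add_min_gens:
  assumes ns: "numerical_semigroup S"
    and t: "t \<in> apery S (multiplicity S)" "t \<noteq> 0" "t \<notin> min_gens S"
    and small: "t < 3 * second_gen S"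
  shows "\<exists>x\<in>min_gens S - {multiplicity S}. \<exists>y\<in>min_gens S - {multiplicity S}. t = x + y"
proof -
  let ?M' = "min_gens S - {multiplicity S}"
  have summand: "u \<in> ?M'" if uv: "t = u + v" "u \<in> S" "v \<in> S" "u \<noteq> 0" "v \<noteq> 0" for u v
  proof -
    obtain g where g: "g \<in> ?M'" "g \<le> u" "u - g \<in> S"
      using apery_summand_min_gen_le[OF ns t(1) uv(1-4)] by blast
    obtain g' where g': "g' \<in> ?M'" "g' \<le> v"
      using apery_summand_min_gen_le[OF ns t(1), of v u] uv by (auto simp: add.commute)
    have "u = g"
    proof (rule ccontr)
      assume "u \<noteq> g"
      have "g \<in> S" using g(1) min_gens_subset by blast
      then have "g + v \<in> S" using numerical_semigroup_add_mem[OF ns _ uv(3)] by blast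
      moreover have "t = (u - g) + (g + v)" "u - g \<noteq> 0" using g(2) uv(1) \<open>u \<noteq> g\<close> by auto
      ultimately obtain g'' where g'': "g'' \<in> ?M'" "g'' \<le> u - g"
        using apery_summand_min_gen_le[OF ns t(1) _ g(3)] by blast
      have "second_gen S \<le> g''" "second_gen S \<le> g" "second_gen S \<le> g'"
        using second_gen_le[OF ns] g(1) g'(1) g''(1) by blast+
      then have "3 * second_gen S \<le> t" using g(2) g'(2) g''(2) uv(1) by linarith
      with small show False by simp
    qed
    with g show ?thesis by simp
  qed
  have "t \<in> S" using t(1) unfolding apery_def by blast
  with t(2,3) obtain y z where "y \<in> S" "z \<in> S" "y \<noteq> 0" "z \<noteq> 0" "t = y + z"
    unfolding min_gens_def by blast
  with summand[of y z] summand[of z y] show ?thesis by (auto simp: add.commute)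
qed

section \<open>Counting elements below the conductor\<close>

definition shifts_below :: "nat \<Rightarrow> nat \<Rightarrow> nat \<Rightarrow> nat" where
  "shifts_below m c w = card {k. w + k * m < c}"

lemma shifts_below_eq_div:
  assumes "0 < m"
  shows "shifts_below m c w = (c - w + m - 1) div m"
proof -
  have "w + k * m < c \<longleftrightarrow> k < (c - w + m - 1) div m" for k
  proof -
    have "k < (c - w + m - 1) div m \<longleftrightarrow> Suc k * m \<le> c - w + m - 1"
      using assms by (simp add: less_eq_div_iff_mult_less_eq Suc_le_eq[symmetric])
    also have "\<dots> \<longleftrightarrow> w + k * m < c" using assms by auto
    finally show ?thesis by simp
  qed
  then have "{k. w + k * m < c} = {..<(c - w + m - 1) div m}" by auto
  then show ?thesis unfolding shifts_below_def by simp
qed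

lemma shifts_below_mult_ge:
  assumes "0 < m"
  shows "c \<le> w + shifts_below m c w * m"
  using assms div_mult_mod_eq[of "c - w + m - 1" m] mod_less_divisor[OF assms, of "c - w + m - 1"]
  unfolding shifts_below_eq_div[OF assms] by linarith

lemma shifts_below_zero_mult_less:
  assumes "0 < m"
  shows "shifts_below m c 0 * m < c + m"
proof -
  have "(c - 0 + m - 1) div m * m \<le> c - 0 + m - 1" by (rule div_times_less_eq_dividend)
  then show ?thesis using assms unfolding shifts_below_eq_div[OF assms] by linarith
qed

text \<open>A deficit occurs only for \<open>x + y\<close> in the window of the \<open>q * m - c < m\<close> values just
  below \<open>c + m\<close>.\<close>

lemma shifts_below_le_add:
  assumes "0 < m" "x + y < c + m"
  defines "q \<equiv> shifts_below m c 0"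
  shows "q \<le> shifts_below m c x + shifts_below m c y + (if c + m \<le> x + y + (q * m - c) then 1 else 0)"
proof -
  let ?s = "shifts_below m c x + shifts_below m c y"
  have s: "2 * c \<le> ?s * m + (x + y)"
    using shifts_below_mult_ge[OF assms(1), of c x] shifts_below_mult_ge[OF assms(1), of c y]
    by (simp add: algebra_simps)
  have q: "c \<le> q * m" "q * m < c + m"
    using shifts_below_mult_ge[OF assms(1), of c 0] shifts_below_zero_mult_less[OF assms(1)]
    unfolding q_def by simp_all
  show ?thesis
  proof (cases "c + m \<le> x + y + (q * m - c)")
    case True
    have "q * m < (?s + 2) * m" using s q assms(2) by (simp add: algebra_simps)
    then have "q < ?s + 2" using mult_less_cancel2 by blast
    then show ?thesis using True by simp
  next
    case False
    have "q * m < (?s + 1) * m" using s q False by (simp add: algebra_simps)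
    then have "q < ?s + 1" using mult_less_cancel2 by blast
    then show ?thesis using False by simp
  qed
qed

lemma card_summand_fibres_le:
  fixes x y :: "nat \<Rightarrow> nat"
  assumes "finite T" "finite P" and xy: "\<And>t. t \<in> T \<Longrightarrow> x t \<in> P \<and> y t \<in> P \<and> t = x t + y t"
  shows "card {t \<in> T. x t = a} + card {t \<in> T. y t = a} \<le> card P + 1"
proof -
  let ?A = "{t \<in> T. x t = a}" and ?B = "{t \<in> T. y t = a}"
  have "card ?A + card ?B = card (?A \<union> ?B) + card (?A \<inter> ?B)"
    using assms(1) by (intro card_Un_Int) auto
  moreover have "card (?A \<inter> ?B) \<le> 1"
  proof -
    have "?A \<inter> ?B \<subseteq> {a + a}" using xy by force
    then show ?thesis using card_mono[of "{a + a}"] by simp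
  qed
  moreover have "card (?A \<union> ?B) \<le> card P"
  proof (rule card_inj_on_le)
    show "inj_on (\<lambda>t. t - a) (?A \<union> ?B)"
      by (rule inj_on_diff_nat) (use xy in force)
    show "(\<lambda>t. t - a) ` (?A \<union> ?B) \<subseteq> P"
    proof
      fix u assume "u \<in> (\<lambda>t. t - a) ` (?A \<union> ?B)"
      then obtain t where "t \<in> T" "x t = a \<or> y t = a" "u = t - a" by blast
      moreover have "t - x t = y t" "t - y t = x t" using xy[OF \<open>t \<in> T\<close>] by linarith+
      ultimately show "u \<in> P" using xy[OF \<open>t \<in> T\<close>] by (elim disjE) simp_all
    qed
  qed (rule assms(2))
  ultimately show ?thesis by linarith
qed

lemma sum_summands_le:
  fixes f :: "nat \<Rightarrow> nat"
  assumes "finite T" "finite P" and xy: "\<And>t. t \<in> T \<Longrightarrow> x t \<in> P \<and> y t \<in> P \<and> t = x t + y t"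
  shows "(\<Sum>t\<in>T. f (x t) + f (y t)) \<le> (card P + 1) * (\<Sum>a\<in>P. f a)"
proof -
  have "(\<Sum>t\<in>T. f (x t) + f (y t)) = (\<Sum>t\<in>T. f (x t)) + (\<Sum>t\<in>T. f (y t))"
    by (rule sum.distrib)
  also have "\<dots> = (\<Sum>a\<in>P. (card {t \<in> T. x t = a} + card {t \<in> T. y t = a}) * f a)"
  proof -
    have "x ` T \<subseteq> P" "y ` T \<subseteq> P" using xy by auto
    then show ?thesis
      using sum_fun_comp[OF assms(1,2), of x f] sum_fun_comp[OF assms(1,2), of y f]
      by (simp add: sum.distrib algebra_simps)
  qed
  also have "\<dots> \<le> (\<Sum>a\<in>P. (card P + 1) * f a)"
    using card_summand_fibres_le[OF assms] by (intro sum_mono mult_right_mono) auto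
  finally show ?thesis by (simp add: sum_distrib_left)
qed

lemma le_mult_sum_shifts_below:
  fixes T P :: "nat set"
  assumes m: "0 < m" and fin: "finite T" "finite P"
    and card: "m \<le> n + card T" "card P < n"
    and T_less: "\<And>t. t \<in> T \<Longrightarrow> t < c + m"
    and T_sum: "\<And>t. t \<in> T \<Longrightarrow> \<exists>x\<in>P. \<exists>y\<in>P. t = x + y"
  shows "c \<le> n * (shifts_below m c 0 + (\<Sum>a\<in>P. shifts_below m c a))"
proof -
  define h where "h = shifts_below m c"
  define q where "q = h 0"
  define \<rho> where "\<rho> = q * m - c"
  have q: "q * m = c + \<rho>" "\<rho> < m"
    using shifts_below_mult_ge[OF m, of c 0] shifts_below_zero_mult_less[OF m, of c]
    unfolding \<rho>_def q_def h_def by simp_all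
  obtain x y where xy: "\<And>t. t \<in> T \<Longrightarrow> x t \<in> P \<and> y t \<in> P \<and> t = x t + y t"
    using T_sum by metis
  have near: "card {t \<in> T. c + m \<le> t + \<rho>} \<le> \<rho>"
  proof -
    have "{t \<in> T. c + m \<le> t + \<rho>} \<subseteq> {c + m - \<rho> ..< c + m}" using T_less by auto
    then have "card {t \<in> T. c + m \<le> t + \<rho>} \<le> card {c + m - \<rho> ..< c + m}"
      by (intro card_mono) auto
    with q(2) show ?thesis by simp
  qed
  have "q * card T = (\<Sum>t\<in>T. q)" by simp
  also have "\<dots> \<le> (\<Sum>t\<in>T. h (x t) + h (y t) + (if c + m \<le> t + \<rho> then 1 else 0))"
  proof (intro sum_mono)
    fix t assume "t \<in> T"
    with xy[of t] T_less[of t] show "q \<le> h (x t) + h (y t) + (if c + m \<le> t + \<rho> then 1 else 0)"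
      using shifts_below_le_add[OF m, of "x t" "y t" c] unfolding \<rho>_def q_def h_def by simp
  qed
  also have "\<dots> = (\<Sum>t\<in>T. h (x t) + h (y t)) + card {t \<in> T. c + m \<le> t + \<rho>}"
    using fin(1) by (simp add: sum.distrib sum.inter_filter[symmetric])
  also have "\<dots> \<le> (card P + 1) * (\<Sum>a\<in>P. h a) + \<rho>"
    using sum_summands_le[OF fin xy] near by (intro add_mono) auto
  also have "\<dots> \<le> n * (\<Sum>a\<in>P. h a) + \<rho>"
    using card(2) by (intro add_mono mult_right_mono) auto
  finally have "q * card T \<le> n * (\<Sum>a\<in>P. h a) + \<rho>" .
  moreover have "q * m \<le> q * n + q * card T"
    using card(1) by (metis add_mult_distrib2 mult_le_mono2)
  ultimately show ?thesis using q(1) unfolding h_def q_def by (simp add: algebra_simps)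
qed

lemma sum_shifts_below_le_card_Lset:
  assumes ns: "numerical_semigroup S" and m: "m \<in> S" "0 < m" and W: "W \<subseteq> apery S m"
  shows "(\<Sum>w\<in>W. shifts_below m (conductor S) w) \<le> card (Lset S)"
proof -
  let ?c = "conductor S"
  let ?F = "\<lambda>w. {k. w + k * m < ?c}"
  have "finite W" using W finite_apery[OF ns] by (rule finite_subset)
  moreover have "\<forall>w\<in>W. finite (?F w)"
  proof
    fix w
    have "?F w \<subseteq> {..<?c}"
    proof
      fix k assume "k \<in> ?F w"
      then have "w + k * m < ?c" by simp
      moreover have "k \<le> k * m" using mult_le_mono2[of 1 m k] m(2) by simp
      ultimately have "k < ?c" by linarith
      then show "k \<in> {..<?c}" by simp
    qed
    then show "finite (?F w)" by (rule finite_subset) simp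
  qed
  ultimately have "(\<Sum>w\<in>W. shifts_below m ?c w) = card (Sigma W ?F)"
    unfolding shifts_below_def by simp
  also have "\<dots> \<le> card (Lset S)"
  proof (rule card_inj_on_le)
    show "inj_on (\<lambda>(w, k). w + k * m) (Sigma W ?F)"
    proof (rule inj_onI, clarsimp)
      fix w k w' k'
      assume w: "w \<in> W" "w' \<in> W" and eq: "w + k * m = w' + k' * m"
      then have "(w + k * m) mod m = (w' + k' * m) mod m" by simp
      then have "w = w'"
        using apery_mod_eq_imp_eq[OF ns m(1)] W w by auto
      with eq m(2) show "w = w' \<and> k = k'" by simp
    qed
    show "(\<lambda>(w, k). w + k * m) ` Sigma W ?F \<subseteq> Lset S"
    proof clarify
      fix w k assume "w \<in> W" "w + k * m < ?c"
      moreover have "w \<in> S" using \<open>w \<in> W\<close> W unfolding apery_def by blast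
      ultimately show "w + k * m \<in> Lset S"
        using numerical_semigroup_add_mem[OF ns _ numerical_semigroup_mult_mem[OF ns m(1)]]
        unfolding Lset_def by blast
    qed
    show "finite (Lset S)" unfolding Lset_def by simp
  qed
  finally show ?thesis .
qed

lemma wilf_if_second_gen_large:
  assumes ns: "numerical_semigroup S"
    and large: "conductor S + multiplicity S < 3 * second_gen S"
  shows "conductor S \<le> emb_dim S * card (Lset S)"
proof -
  let ?m = "multiplicity S" and ?c = "conductor S" and ?n = "emb_dim S" and ?M = "min_gens S"
  define T where "T = apery S ?m - {0} - ?M"
  define P where "P = {g \<in> ?M - {?m}. g < ?c}"
  have m: "?m \<in> S" "0 < ?m"
    using multiplicity_in_min_gens[OF ns] min_gens_subset multiplicity_pos[OF ns] by auto
  have T_less: "t < ?c + ?m" if "t \<in> T" for t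
    using apery_less_conductor_add[OF ns] that unfolding T_def by blast
  have T_sum: "\<exists>x\<in>P. \<exists>y\<in>P. t = x + y" if t: "t \<in> T" for t
  proof -
    have "t < 3 * second_gen S" using T_less[OF t] large by linarith
    then obtain x y where xy: "x \<in> ?M - {?m}" "y \<in> ?M - {?m}" "t = x + y"
      using apery_multiplicity_eq_add_min_gens[OF ns] t unfolding T_def by blast
    moreover have "?m < x" "?m < y"
      using xy multiplicity_le[OF ns] by (simp_all add: le_neq_implies_less)
    ultimately show ?thesis using T_less[OF t] unfolding P_def by auto
  qed
  have "card P < ?n"
  proof -
    have "card P \<le> card (?M - {?m})"
      using finite_min_gens[OF ns] unfolding P_def by (intro card_mono) auto
    also have "\<dots> < card ?M"
      using finite_min_gens[OF ns] multiplicity_in_min_gens[OF ns] by (rule card_Diff1_less)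
    finally show ?thesis unfolding emb_dim_def .
  qed
  moreover have "finite T" "finite P"
    using finite_apery[OF ns] finite_min_gens[OF ns] unfolding T_def P_def by auto
  ultimately have "?c \<le> ?n * (shifts_below ?m ?c 0 + (\<Sum>a\<in>P. shifts_below ?m ?c a))"
    using le_mult_sum_shifts_below[OF m(2), of T P ?n ?c] T_less T_sum
      multiplicity_eq_emb_dim_add_card[OF ns, folded T_def]
    by simp
  also have "shifts_below ?m ?c 0 + (\<Sum>a\<in>P. shifts_below ?m ?c a)
      = (\<Sum>w\<in>insert 0 P. shifts_below ?m ?c w)"
    using finite_min_gens[OF ns] zero_notin_min_gens unfolding P_def by simp
  also have "\<dots> \<le> card (Lset S)"
    using min_gens_in_apery[OF m] zero_in_apery[OF ns m(2)]
    by (intro sum_shifts_below_le_card_Lset[OF ns m]) (auto simp: P_def)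
  finally show ?thesis by simp
qed

text \<open>Hypothesis (i) alone suffices.\<close>

theorem theorem4p5:
  fixes \<epsilon> :: real
  assumes "\<epsilon> > 0"
  shows "\<exists>\<nu>\<^sub>0::nat. \<forall>S. numerical_semigroup S \<longrightarrow>
     real (second_gen S) > (real (conductor S) + real (multiplicity S)) / 3 \<longrightarrow>
     emb_dim S \<ge> \<nu>\<^sub>0 \<longrightarrow>
     real (multiplicity S) \<le> 8/25 * real (emb_dim S)^2 + 1/5 * real (emb_dim S) - 1/2 - \<epsilon> \<longrightarrow>
     emb_dim S * card (Lset S) \<ge> conductor S"
proof (intro exI[of _ 0] allI impI)
  fix S assume ns: "numerical_semigroup S"
    and "real (second_gen S) > (real (conductor S) + real (multiplicity S)) / 3"
  then have "real (conductor S + multiplicity S) < real (3 * second_gen S)" by simp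
  then have "conductor S + multiplicity S < 3 * second_gen S" by (simp only: of_nat_less_iff)
  with ns show "conductor S \<le> emb_dim S * card (Lset S)" by (rule wilf_if_second_gen_large)
qed

end
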